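(* Let $K$ be an algebraically closed field of characteristic three, and let $C_3^2 = C_3\times C_3$. For any injective group homomorphism $\iota\colon C_3^2\to \mathrm{SL}(3,K)$ whose image is small, there exist $a\in K\setminus\mathbb F_3$ and $b\in K$ such that $\sigma(U(a,b))$ is conjugate in $\mathrm{GL}(3,K)$ to $\iota(C_3^2)$. Here $U(a,b)$ is the subgroup of the additive group $(K^2,+)$ generated by $(1,0)$ and $(a,b)$, and $\sigma\colon (K^2,+)\to \mathrm{SL}(3,K)$ is the group homomorphism $$\sigma(c_1,c_2)=\begin{pmatrix}1&-c_1&c_1^2+c_2\\0&1&c_1\\0&0&1\end{pmatrix}.$$
   Context: A subgroup $G\subset\mathrm{GL}(n,K)$ acts on $K^n$; an element $g\in G$ is a pseudo-reflection if its fixed subspace $(K^n)^g$ has dimension $n-1$. The group $G$ is called small if it contains no pseudo-reflection. $\mathbb F_3\subset K$ denotes the prime field. *)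

theory Defs
  imports "HOL-Analysis.Analysis" "HOL-Computational_Algebra.Polynomial" "HOL-Library.Numeral_Type"
begin

text \<open>The cyclic group C3 is the additive group of the numeral type 3 (integers mod 3);
  C3^2 is the additive group of the product type 3 \<times> 3. Matrices are 'a^3^3.\<close>

definition SL3 :: "(('a::field)^3^3) set" where
  "SL3 = {A. det A = 1}"

definition GL3 :: "(('a::field)^3^3) set" where
  "GL3 = {A. invertible A}"

definition fixed_space :: "('a::field)^3^3 \<Rightarrow> ('a^3) set" where
  "fixed_space g = {v. g *v v = v}"

definition pseudo_reflection :: "('a::field)^3^3 \<Rightarrow> bool" where
  "pseudo_reflection g \<longleftrightarrow> vec.dim (fixed_space g) = 3 - 1"

definition small :: "(('a::field)^3^3) set \<Rightarrow> bool" where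
  "small G \<longleftrightarrow> (\<forall>g\<in>G. \<not> pseudo_reflection g)"

definition prime_subfield :: "('a::field) set" where
  "prime_subfield = range of_int"

definition U :: "'a::field \<Rightarrow> 'a \<Rightarrow> ('a \<times> 'a) set" where
  "U a b = {(of_int i + of_int j * a, of_int j * b) | i j. True}"

definition sigma :: "('a::field) \<times> 'a \<Rightarrow> 'a^3^3" where
  "sigma c = (case c of (c1, c2) \<Rightarrow>
     vector [vector [1, - c1, c1^2 + c2],
             vector [0, 1, c1],
             vector [0, 0, 1]])"

definition conjugate_in_GL3 :: "(('a::field)^3^3) set \<Rightarrow> ('a^3^3) set \<Rightarrow> bool" where
  "conjugate_in_GL3 G H \<longleftrightarrow>
     (\<exists>P \<in> GL3. (\<lambda>M. matrix_inv P ** M ** P) ` G = H)"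

end

theory Submission
  imports Defs
begin

text \<open>Put g = \<iota>(1,0). In characteristic 3 the relation g^3 = 1 makes N = g - 1 nilpotent, and
  N^2 \<noteq> 0, since otherwise the fixed space of g would be a plane and g a pseudo-reflection.
  A Jordan chain of N therefore conjugates g to \<sigma>(1,0). The centraliser of \<sigma>(1,0) in SL(3,K) is
  \<sigma>(K^2) (its diagonal entry is a cube root of unity, hence 1), so after conjugation
  \<iota> = \<sigma> \<circ> (c,d) for an additive map (c,d) : C3^2 \<rightarrow> K^2 with (c,d)(1,0) = (1,0), whose
  image is U(a,b) for (a,b) = (c,d)(0,1). If a lay in F_3, then c would vanish at some y \<noteq> 0,
  and \<iota>(y), being conjugate to \<sigma>(0,d(y)) \<noteq> 1, would be a pseudo-reflection.\<close>

section \<open>Matrix algebra and conjugation\<close>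

lemma matrix_add_rdistrib:
  fixes A B :: "'a::semiring_1^'n^'m"
  shows "(A + B) ** C = A ** C + B ** C"
  by (simp add: vec_eq_iff matrix_matrix_mult_def sum.distrib algebra_simps)

lemma matrix_diff_ldistrib:
  fixes A B :: "'a::ring_1^'n^'m"
  shows "C ** (A - B) = C ** A - C ** B"
  by (simp add: vec_eq_iff matrix_matrix_mult_def sum_subtractf algebra_simps)

lemma matrix_diff_rdistrib:
  fixes A B :: "'a::ring_1^'n^'m"
  shows "(A - B) ** C = A ** C - B ** C"
  by (simp add: vec_eq_iff matrix_matrix_mult_def sum_subtractf algebra_simps)

lemma matrix_inv_right:
  fixes P :: "'a::semiring_1^'n^'n"
  assumes "invertible P"
  shows "P ** matrix_inv P = mat 1"
  using someI_ex[OF assms[unfolded invertible_def]] by (simp add: matrix_inv_def)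

lemma matrix_inv_left:
  fixes P :: "'a::semiring_1^'n^'n"
  assumes "invertible P"
  shows "matrix_inv P ** P = mat 1"
  using someI_ex[OF assms[unfolded invertible_def]] by (simp add: matrix_inv_def)

lemma invertible_matrix_inv:
  fixes P :: "'a::semiring_1^'n^'n"
  assumes "invertible P"
  shows "invertible (matrix_inv P)"
  using matrix_inv_left[OF assms] matrix_inv_right[OF assms] invertible_def by blast

lemma matrix_inv_matrix_inv:
  fixes P :: "'a::semiring_1^'n^'n"
  assumes "invertible P"
  shows "matrix_inv (matrix_inv P) = P"
proof -
  have "matrix_inv (matrix_inv P) = matrix_inv (matrix_inv P) ** (matrix_inv P ** P)"
    by (simp add: matrix_inv_left[OF assms])
  also have "\<dots> = P"
    by (simp add: matrix_mul_assoc matrix_inv_left[OF invertible_matrix_inv[OF assms]])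
  finally show ?thesis .
qed

lemma matrix_conj_mult:
  fixes P :: "'a::semiring_1^'n^'n"
  assumes "invertible P"
  shows "matrix_inv P ** (A ** B) ** P = (matrix_inv P ** A ** P) ** (matrix_inv P ** B ** P)"
proof -
  have "A ** B = A ** (P ** matrix_inv P) ** B"
    by (simp add: matrix_inv_right[OF assms])
  then show ?thesis by (simp add: matrix_mul_assoc)
qed

lemma matrix_conj_cancel:
  fixes P :: "'a::semiring_1^'n^'n"
  assumes "invertible P"
  shows "P ** (matrix_inv P ** A ** P) ** matrix_inv P = A"
  by (simp add: matrix_mul_assoc matrix_inv_right[OF assms])
    (simp add: matrix_mul_assoc[symmetric] matrix_inv_right[OF assms])

lemma det_matrix_conj:
  fixes P :: "'a::field^'n^'n"
  assumes "invertible P"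
  shows "det (matrix_inv P ** A ** P) = det A"
proof -
  have "det (matrix_inv P) * det P = 1"
    using det_mul[of "matrix_inv P" P] by (simp add: matrix_inv_left[OF assms])
  then show ?thesis by (simp add: det_mul algebra_simps)
qed

lemma conjugate_in_GL3_matrix_conj:
  fixes P :: "'a::field^3^3"
  assumes "invertible P"
  shows "conjugate_in_GL3 ((\<lambda>M. matrix_inv P ** M ** P) ` H) H"
proof -
  have "(\<lambda>M. P ** M ** matrix_inv P) ` (\<lambda>M. matrix_inv P ** M ** P) ` H = H"
    by (simp add: image_image matrix_conj_cancel[OF assms])
  moreover have "matrix_inv P \<in> GL3"
    using invertible_matrix_inv[OF assms] by (simp add: GL3_def)
  ultimately show ?thesis
    unfolding conjugate_in_GL3_def
    by (intro bexI[of _ "matrix_inv P"]) (simp_all only: matrix_inv_matrix_inv[OF assms])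
qed

section \<open>Characteristic three\<close>

lemma three_eq_zero_CHAR_3:
  assumes "CHAR('a::semiring_1) = 3"
  shows "(3::'a) = 0"
  using of_nat_CHAR[where 'a='a] assms by simp

lemma triple_eq_zero_CHAR_3:
  assumes "CHAR('a::comm_ring_1) = 3"
  shows "(x::'a) + x + x = 0"
proof -
  have "x + x + x = 3 * x" by (simp add: algebra_simps)
  then show ?thesis using three_eq_zero_CHAR_3[OF assms] by simp
qed

lemma C3_sq_triple_eq_zero: "(x::3 \<times> 3) + x + x = 0"
proof -
  have "(a::3) + a + a = 0" for a by (rule triple_eq_zero_CHAR_3) simp
  then show ?thesis by (cases x) (simp only: add_Pair zero_prod_def)
qed

lemma cube_eq_one_CHAR_3:
  assumes "CHAR('a::idom) = 3" "(x::'a) ^ 3 = 1"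
  shows "x = 1"
proof -
  have "(x - 1) ^ 3 = (x ^ 3 - 1) - 3 * (x ^ 2 - x)"
    by (simp add: power3_eq_cube power2_eq_square algebra_simps)
  also have "\<dots> = 0"
    using assms three_eq_zero_CHAR_3[OF assms(1)] by simp
  finally show ?thesis by simp
qed

lemma matrix_cube_minus_one_CHAR_3:
  fixes g :: "'a::comm_ring_1^'n^'n"
  assumes "CHAR('a) = 3" and "g ** g ** g = mat 1"
  shows "(g - mat 1) ** (g - mat 1) ** (g - mat 1) = 0"
proof -
  define N where "N = g - mat 1"
  have triple: "X + X + X = 0" for X :: "'a^'n^'n"
    by (simp add: vec_eq_iff three_eq_zero_CHAR_3[OF assms(1)])
  have "g = N + mat 1" unfolding N_def by simp
  then have "g ** g ** g = N ** N ** N + (N ** N + N ** N + N ** N) + (N + N + N) + mat 1"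
    by (simp only: matrix_add_ldistrib matrix_add_rdistrib matrix_mul_lid matrix_mul_rid add_ac)
  then have "g ** g ** g = N ** N ** N + mat 1"
    by (simp only: triple add_0_right)
  then show ?thesis using assms(2) by (simp add: N_def)
qed

section \<open>Pseudo-reflections\<close>

lemma dim_null_space_less_CARD:
  fixes A :: "'a::field^'n^'m"
  assumes "A \<noteq> 0"
  shows "vec.dim {x. A *v x = 0} < CARD('n)"
proof -
  define K where "K = {x. A *v x = 0}"
  have span_K: "vec.span K = K"
    unfolding K_def by (simp add: vec.span_eq_iff vec.subspace_kernel)
  obtain u where "A *v u \<noteq> 0" using assms matrix_eq[of A 0] by auto
  then have "K \<noteq> UNIV" by (auto simp: K_def)
  have "vec.dim K \<noteq> CARD('n)"
  proof
    assume "vec.dim K = CARD('n)"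
    then have "vec.span K = vec.span UNIV"
      by (intro vec.dim_eq_span) (simp_all add: card_cart_basis)
    with span_K \<open>K \<noteq> UNIV\<close> show False by simp
  qed
  moreover have "vec.dim K \<le> CARD('n)"
    using vec.dim_subset[of K UNIV] by (simp add: card_cart_basis)
  ultimately show ?thesis by (simp add: K_def)
qed

lemma dim_null_space_square_zero:
  fixes A :: "'a::field^3^3"
  assumes "A \<noteq> 0" and "A ** A = 0"
  shows "vec.dim {x. A *v x = 0} = 2"
proof -
  define K where "K = {x. A *v x = 0}"
  have span_K: "vec.span K = K"
    unfolding K_def by (simp add: vec.span_eq_iff vec.subspace_kernel)
  have image_K: "A *v x \<in> K" for x
    using assms(2) by (simp add: K_def matrix_vector_mul_assoc)
  obtain u where u: "A *v u \<noteq> 0" using assms(1) matrix_eq[of A 0] by auto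
  define w where "w = A *v u"
  have "\<not> vec.dim K \<le> 1"
  proof
    assume "vec.dim K \<le> 1"
    moreover have "w \<in> K" "w \<noteq> 0" using image_K u by (simp_all add: w_def)
    ultimately have "vec.span {w} = K"
      using vec.dim_eq_span[of "{w}" K] span_K by (simp add: vec.dim_span)
    then have K_line: "K = range (\<lambda>c. c *s w)" by (simp add: vec.span_singleton)
    have "UNIV \<subseteq> vec.span {w, u}"
    proof
      fix x :: "'a^3"
      obtain c where "A *v x = c *s w" using image_K[of x] K_line by auto
      then have "x - c *s u \<in> K"
        by (simp add: K_def w_def matrix_vector_mult_diff_distrib vector_scalar_commute)
      then obtain k where "x - c *s u = k *s w" using K_line by auto
      then have "x = k *s w + c *s u" by (simp add: algebra_simps)
      then show "x \<in> vec.span {w, u}"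
        by (simp add: vec.span_add vec.span_scale vec.span_base)
    qed
    then have "vec.dim (UNIV :: ('a^3) set) \<le> card {w, u}" by (intro vec.dim_le_card) simp_all
    also have "\<dots> \<le> 2" by (simp add: card_insert_if)
    finally show False by (simp add: card_cart_basis)
  qed
  then show ?thesis using dim_null_space_less_CARD[OF assms(1)] by (simp add: K_def)
qed

lemma fixed_space_eq_null_space: "fixed_space g = {x. (g - mat 1) *v x = 0}"
  by (simp add: fixed_space_def matrix_vector_mult_diff_rdistrib)

lemma pseudo_reflection_if_square_zero:
  fixes g :: "'a::field^3^3"
  assumes "g \<noteq> mat 1" and "(g - mat 1) ** (g - mat 1) = 0"
  shows "pseudo_reflection g"
proof -
  have "g - mat 1 \<noteq> 0" using assms(1) by simp
  then show ?thesis
    using dim_null_space_square_zero[of "g - mat 1"] assms(2)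
    by (simp add: pseudo_reflection_def fixed_space_eq_null_space)
qed

lemma fixed_space_matrix_conj:
  fixes P :: "'a::field^3^3"
  assumes "invertible P"
  shows "fixed_space (matrix_inv P ** g ** P) = (\<lambda>x. matrix_inv P *v x) ` fixed_space g"
proof -
  have P_cancel: "P *v (matrix_inv P *v y) = y" "matrix_inv P *v (P *v y) = y" for y
    by (simp_all add: matrix_vector_mul_assoc matrix_inv_left[OF assms] matrix_inv_right[OF assms])
  have mem: "x \<in> fixed_space (matrix_inv P ** g ** P) \<longleftrightarrow> P *v x \<in> fixed_space g" for x
    unfolding fixed_space_def
    by (simp only: mem_Collect_eq matrix_vector_mul_assoc[symmetric]) (metis P_cancel)
  show ?thesis
  proof
    show "fixed_space (matrix_inv P ** g ** P) \<subseteq> (\<lambda>x. matrix_inv P *v x) ` fixed_space g"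
      using mem P_cancel(2) by (metis image_eqI subsetI)
    show "(\<lambda>x. matrix_inv P *v x) ` fixed_space g \<subseteq> fixed_space (matrix_inv P ** g ** P)"
      using mem P_cancel(1) by auto
  qed
qed

lemma pseudo_reflection_matrix_conj:
  fixes P :: "'a::field^3^3"
  assumes "invertible P"
  shows "pseudo_reflection (matrix_inv P ** g ** P) \<longleftrightarrow> pseudo_reflection g"
proof -
  have "inj ((*v) (matrix_inv P))"
    using invertible_matrix_inv[OF assms] by (simp add: invertible_eq_bij bij_is_inj)
  then have "vec.dim ((*v) (matrix_inv P) ` fixed_space g) = vec.dim (fixed_space g)"
    by (intro vec.dim_image_eq) (auto intro: inj_on_subset)
  then show ?thesis
    by (simp add: pseudo_reflection_def fixed_space_matrix_conj[OF assms])
qed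

lemma small_matrix_conj:
  fixes P :: "'a::field^3^3"
  assumes "invertible P"
  shows "small ((\<lambda>g. matrix_inv P ** g ** P) ` G) \<longleftrightarrow> small G"
  by (simp add: small_def pseudo_reflection_matrix_conj[OF assms])

section \<open>The matrices \<sigma>(c1,c2)\<close>

lemma sigma_add:
  assumes "CHAR('a::field) = 3"
  shows "sigma (a1::'a, b1) ** sigma (a2, b2) = sigma (a1 + a2, b1 + b2)"
proof -
  have "a1 * a2 * 3 = 0" using three_eq_zero_CHAR_3[OF assms] by simp
  then show ?thesis
    unfolding sigma_def
    by (simp add: vec_eq_iff forall_3 matrix_matrix_mult_def sum_3 power2_eq_square algebra_simps)
qed

lemma inj_sigma: "inj sigma"
proof (rule injI)
  fix x y :: "'a \<times> 'a"
  assume "sigma x = sigma y"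
  then have "sigma x $ 2 $ 3 = sigma y $ 2 $ 3" "sigma x $ 1 $ 3 = sigma y $ 1 $ 3" by simp_all
  then show "x = y" by (cases x, cases y) (simp add: sigma_def)
qed

lemma sigma_0_minus_one_square: "(sigma (0, b) - mat 1) ** (sigma (0, b) - mat 1) = 0"
  by (simp add: sigma_def vec_eq_iff forall_3 matrix_matrix_mult_def sum_3 mat_def)

lemma commute_sigma_one_eq_sigma:
  fixes M :: "'a::field^3^3"
  assumes "CHAR('a) = 3" and "M ** sigma (1, 0) = sigma (1, 0) ** M" and "det M = 1"
  shows "M = sigma (M $ 2 $ 3, M $ 1 $ 3 - (M $ 2 $ 3)^2)"
proof -
  have "M ** (sigma (1, 0) - mat 1) = (sigma (1, 0) - mat 1) ** M"
    by (simp add: matrix_diff_ldistrib matrix_diff_rdistrib assms(2))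
  then have entry: "(M ** (sigma (1, 0) - mat 1)) $ i $ j = ((sigma (1, 0) - mat 1) ** M) $ i $ j"
    for i j by simp
  have M: "M $ 3 $ 1 = 0" "M $ 1 $ 1 = M $ 3 $ 3" "M $ 1 $ 2 = - M $ 2 $ 3"
    "M $ 2 $ 1 = 0" "M $ 3 $ 2 = 0" "M $ 2 $ 2 = M $ 3 $ 3"
    using entry[of 1 1] entry[of 1 2] entry[of 1 3] entry[of 2 1] entry[of 2 2] entry[of 2 3]
      entry[of 3 1] entry[of 3 2] entry[of 3 3]
    by (simp_all add: sigma_def matrix_matrix_mult_def sum_3 mat_def)
  have "(M $ 3 $ 3) ^ 3 = 1"
    using assms(3) M by (simp add: det_3 power3_eq_cube)
  then have "M $ 3 $ 3 = 1" by (rule cube_eq_one_CHAR_3[OF assms(1)])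
  then show ?thesis using M by (simp add: sigma_def vec_eq_iff forall_3)
qed

lemma sigma_coordinates_of_hom:
  fixes \<rho> :: "'g::ab_semigroup_add \<Rightarrow> 'a::field^3^3"
  assumes "CHAR('a) = 3" and hom: "\<And>x y. \<rho> (x + y) = \<rho> x ** \<rho> y"
    and det: "\<And>x. det (\<rho> x) = 1" and "\<rho> e = sigma (1, 0)"
  obtains c d where "\<And>x y. c (x + y) = c x + c y" and "\<And>x y. d (x + y) = d x + d y"
    and "c e = 1" and "d e = 0" and "\<And>x. \<rho> x = sigma (c x, d x)"
proof -
  define c where "c x = \<rho> x $ 2 $ 3" for x
  define d where "d x = \<rho> x $ 1 $ 3 - (c x)\<^sup>2" for x
  have "\<rho> x ** sigma (1, 0) = sigma (1, 0) ** \<rho> x" for x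
    using hom[of x e] hom[of e x] by (simp add: add.commute assms(4))
  then have \<rho>_sigma: "\<rho> x = sigma (c x, d x)" for x
    unfolding c_def d_def using commute_sigma_one_eq_sigma[OF assms(1) _ det] by blast
  have "sigma (c (x + y), d (x + y)) = sigma (c x + c y, d x + d y)" for x y
    using hom[of x y] by (simp only: \<rho>_sigma sigma_add[OF assms(1)])
  then have "(c (x + y), d (x + y)) = (c x + c y, d x + d y)" for x y
    by (rule injD[OF inj_sigma])
  moreover have "(c e, d e) = (1, 0)"
    using \<rho>_sigma[of e] assms(4) by (intro injD[OF inj_sigma]) simp
  ultimately show ?thesis by (intro that[of c d]) (simp_all add: \<rho>_sigma)
qed

lemma sigma_one_minus_one_apply:
  "(sigma (1, 0) - mat 1) *v z = vector [z$3 - z$2, z$3, 0 :: 'a::field]"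
  by (simp add: sigma_def vec_eq_iff forall_3 matrix_vector_mult_def sum_3 mat_def)

lemma Jordan_chain_similar_sigma_one_minus_one:
  fixes N :: "'a::field^3^3"
  assumes "N *v (N *v (N *v v)) = 0" and "N *v (N *v v) \<noteq> 0"
  obtains P where "invertible P" and "N ** P = P ** (sigma (1, 0) - mat 1)"
proof -
  define w1 where "w1 = N *v v"
  define w2 where "w2 = N *v w1"
  have Nv: "N *v v = w1" and Nw1: "N *v w1 = w2" and w2: "N *v w2 = 0" "w2 \<noteq> 0"
    using assms by (simp_all add: w1_def w2_def)
  \<comment> \<open>\<sigma>(1,0) - 1 maps e1 to 0, e2 to -e1 and e3 to e1 + e2; N acts likewise on the columns of P.\<close>
  define P :: "'a^3^3" where
    "P = (\<chi> i j. if j = 1 then - w2 $ i else if j = 2 then w1 $ i + w2 $ i else v $ i)"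
  have P_apply: "P *v z = z$1 *s (- w2) + z$2 *s (w1 + w2) + z$3 *s v" for z
    by (simp add: P_def vec_eq_iff matrix_vector_mult_def sum_3 algebra_simps)
  have NP_apply: "N *v (P *v z) = z$2 *s w2 + z$3 *s w1" for z
    unfolding P_apply by (simp add: vec.add vec.diff vec.scale vec.neg Nv Nw1 w2)
  have "invertible P"
    unfolding invertible_left_inverse matrix_left_invertible_ker
  proof (intro allI impI)
    fix z assume Pz: "P *v z = 0"
    then have comb: "z$2 *s w2 + z$3 *s w1 = 0" using NP_apply[of z] by simp
    moreover have "z$3 *s w2 = 0"
      using arg_cong[OF comb, of "(*v) N"] by (simp add: vec.add vec.scale Nw1 w2)
    ultimately have "z$3 = 0" "z$2 = 0" using w2 by simp_all
    moreover from this have "z$1 = 0" using Pz w2 by (simp add: P_apply)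
    ultimately show "z = 0" by (simp add: vec_eq_iff forall_3)
  qed
  moreover have "(N ** P) *v z = (P ** (sigma (1, 0) - mat 1)) *v z" for z
  proof -
    have "(N ** P) *v z = z$2 *s w2 + z$3 *s w1"
      by (simp add: NP_apply flip: matrix_vector_mul_assoc)
    also have "\<dots> = P *v ((sigma (1, 0) - mat 1) *v z)"
      unfolding P_apply sigma_one_minus_one_apply by (simp add: vec_eq_iff algebra_simps)
    finally show ?thesis by (simp add: matrix_vector_mul_assoc)
  qed
  ultimately show ?thesis using that by (simp add: matrix_eq)
qed

lemma order_three_similar_sigma_one:
  fixes g :: "'a::field^3^3"
  assumes "CHAR('a) = 3" and "g ** g ** g = mat 1" and "g \<noteq> mat 1" and "\<not> pseudo_reflection g"
  obtains P where "invertible P" and "matrix_inv P ** g ** P = sigma (1, 0)"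
proof -
  have "(g - mat 1) ** (g - mat 1) \<noteq> 0"
    using pseudo_reflection_if_square_zero assms(3,4) by blast
  then obtain v where "(g - mat 1) *v ((g - mat 1) *v v) \<noteq> 0"
    using matrix_eq[of "(g - mat 1) ** (g - mat 1)" 0] by (auto simp: matrix_vector_mul_assoc)
  moreover have "(g - mat 1) *v ((g - mat 1) *v ((g - mat 1) *v v)) = 0"
    using matrix_cube_minus_one_CHAR_3[OF assms(1,2)]
    by (simp add: matrix_vector_mul_assoc matrix_mul_assoc)
  ultimately obtain P where P: "invertible P" "(g - mat 1) ** P = P ** (sigma (1, 0) - mat 1)"
    using Jordan_chain_similar_sigma_one_minus_one by metis
  then have "g ** P = P ** sigma (1, 0)"
    by (simp add: matrix_diff_ldistrib matrix_diff_rdistrib)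
  then have "matrix_inv P ** g ** P = sigma (1, 0)"
    by (metis matrix_inv_left[OF P(1)] matrix_mul_assoc matrix_mul_lid)
  with P(1) show ?thesis by (rule that)
qed

section \<open>Additive maps on C3^2\<close>

lemma additive_of_int:
  fixes \<phi> :: "'b::ring_1 \<Rightarrow> 'a::ring_1"
  assumes "\<And>x y. \<phi> (x + y) = \<phi> x + \<phi> y"
  shows "\<phi> (of_int k) = of_int k * \<phi> 1"
proof (induction k rule: int_induct[where k = 0])
  case base
  show ?case using assms[of 0 0] by simp
next
  case (step1 i)
  have "\<phi> (of_int (i + 1)) = \<phi> (of_int i) + \<phi> 1" by (simp add: assms)
  then show ?case using step1 by (simp add: algebra_simps)
next
  case (step2 i)
  have "\<phi> (of_int i) = \<phi> (of_int (i - 1)) + \<phi> 1"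
    using assms[of "of_int (i - 1)" 1] by simp
  then show ?case using step2 by (simp add: algebra_simps)
qed

lemma additive_C3_sq_of_int:
  fixes c :: "3 \<times> 3 \<Rightarrow> 'a::ring_1"
  assumes "\<And>x y. c (x + y) = c x + c y"
  shows "c (of_int i, of_int j) = of_int i * c (1, 0) + of_int j * c (0, 1)"
proof -
  have "c (s + t, 0) = c (s, 0) + c (t, 0)" "c (0, s + t) = c (0, s) + c (0, t)" for s t
    using assms[of "(s, 0)" "(t, 0)"] assms[of "(0, s)" "(0, t)"] by simp_all
  then have "c (of_int i, 0) = of_int i * c (1, 0)" "c (0, of_int j) = of_int j * c (0, 1)"
    using additive_of_int[of "\<lambda>s. c (s, 0)"] additive_of_int[of "\<lambda>s. c (0, s)"] by blast+
  moreover have "c (of_int i, of_int j) = c (of_int i, 0) + c (0, of_int j)"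
    using assms[of "(of_int i, 0)" "(0, of_int j)"] by simp
  ultimately show ?thesis by simp
qed

lemma C3_sq_of_int_cases:
  obtains i j where "(y :: 3 \<times> 3) = (of_int i, of_int j)"
proof -
  have "\<exists>k. (s::3) = of_int k" for s by (cases s) auto
  then show ?thesis using that by (metis prod.collapse)
qed

lemma range_additive_eq_U:
  fixes c d :: "3 \<times> 3 \<Rightarrow> 'a::field"
  assumes "\<And>x y. c (x + y) = c x + c y" and "\<And>x y. d (x + y) = d x + d y"
    and "c (1, 0) = 1" and "d (1, 0) = 0"
  shows "range (\<lambda>y. (c y, d y)) = U (c (0, 1)) (d (0, 1))"
proof -
  have cd: "(c (of_int i, of_int j), d (of_int i, of_int j))
      = (of_int i + of_int j * c (0, 1), of_int j * d (0, 1))" for i j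
    using additive_C3_sq_of_int[of c, OF assms(1)] additive_C3_sq_of_int[of d, OF assms(2)] assms(3,4)
    by simp
  show ?thesis
  proof
    show "range (\<lambda>y. (c y, d y)) \<subseteq> U (c (0, 1)) (d (0, 1))"
    proof
      fix p assume "p \<in> range (\<lambda>y. (c y, d y))"
      then obtain y where p: "p = (c y, d y)" by blast
      obtain i j where "y = (of_int i, of_int j)" by (rule C3_sq_of_int_cases)
      then show "p \<in> U (c (0, 1)) (d (0, 1))" using p cd unfolding U_def by blast
    qed
    show "U (c (0, 1)) (d (0, 1)) \<subseteq> range (\<lambda>y. (c y, d y))"
      unfolding U_def by (auto simp flip: cd)
  qed
qed

lemma notin_prime_subfield_if_trivial_kernel:
  fixes c :: "3 \<times> 3 \<Rightarrow> 'a::field"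
  assumes "\<And>x y. c (x + y) = c x + c y" and "c (1, 0) = 1" and "\<And>y. c y = 0 \<Longrightarrow> y = 0"
  shows "c (0, 1) \<notin> prime_subfield"
proof
  assume "c (0, 1) \<in> prime_subfield"
  then obtain k where k: "c (0, 1) = of_int k" by (auto simp: prime_subfield_def)
  have "c (of_int k, of_int (- 1)) = of_int k * c (1, 0) + of_int (- 1) * c (0, 1)"
    by (rule additive_C3_sq_of_int[OF assms(1)])
  also have "\<dots> = 0" using assms(2) k by simp
  finally have "((of_int k, of_int (- 1)) :: 3 \<times> 3) = 0" by (rule assms(3))
  then show False by (simp add: zero_prod_def)
qed

section \<open>Small faithful representations of C3^2 in SL(3,K)\<close>

definition small_faithful_rep :: "('g::plus \<Rightarrow> 'a::field^3^3) \<Rightarrow> bool" where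
  "small_faithful_rep \<iota> \<longleftrightarrow>
     (\<forall>x y. \<iota> (x + y) = \<iota> x ** \<iota> y) \<and> inj \<iota> \<and> range \<iota> \<subseteq> SL3 \<and> small (range \<iota>)"

lemma small_faithful_repD:
  assumes "small_faithful_rep \<iota>"
  shows "\<iota> (x + y) = \<iota> x ** \<iota> y" and "inj \<iota>" and "det (\<iota> x) = 1" and "\<not> pseudo_reflection (\<iota> x)"
  using assms by (auto simp: small_faithful_rep_def SL3_def small_def image_subset_iff)

lemma small_faithful_rep_zero:
  fixes \<iota> :: "'g::monoid_add \<Rightarrow> 'a::field^3^3"
  assumes "small_faithful_rep \<iota>"
  shows "\<iota> 0 = mat 1"
proof -
  have inv: "matrix_inv (\<iota> 0) ** \<iota> 0 = mat 1"
    using small_faithful_repD(3)[OF assms] by (simp add: matrix_inv_left invertible_det_nz)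
  have "\<iota> 0 = matrix_inv (\<iota> 0) ** \<iota> 0 ** \<iota> 0" by (simp add: inv)
  also have "\<dots> = matrix_inv (\<iota> 0) ** \<iota> (0 + 0)"
    by (simp only: small_faithful_repD(1)[OF assms] matrix_mul_assoc)
  also have "\<dots> = mat 1" using inv by simp
  finally show ?thesis .
qed

lemma small_faithful_rep_matrix_conj:
  fixes P :: "'a::field^3^3"
  assumes "invertible P" and "small_faithful_rep \<iota>"
  shows "small_faithful_rep (\<lambda>y. matrix_inv P ** \<iota> y ** P)"
proof -
  note rep = small_faithful_repD[OF assms(2)]
  have "inj (\<lambda>y. matrix_inv P ** \<iota> y ** P)"
  proof (rule injI)
    fix x y assume "matrix_inv P ** \<iota> x ** P = matrix_inv P ** \<iota> y ** P"
    then have "\<iota> x = \<iota> y" by (metis matrix_conj_cancel[OF assms(1)])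
    then show "x = y" using rep(2) by (simp add: inj_eq)
  qed
  moreover have "small (range (\<lambda>y. matrix_inv P ** \<iota> y ** P))"
    using assms(2) small_matrix_conj[OF assms(1), of "range \<iota>"]
    by (simp add: small_faithful_rep_def image_image)
  ultimately show ?thesis
    by (simp add: small_faithful_rep_def SL3_def image_subset_iff rep(1,3)
        matrix_conj_mult[OF assms(1)] det_matrix_conj[OF assms(1)])
qed

lemma small_faithful_rep_C3_sq_similar_sigma_one:
  fixes \<iota> :: "3 \<times> 3 \<Rightarrow> 'a::field^3^3"
  assumes "CHAR('a) = 3" and "small_faithful_rep \<iota>"
  obtains P where "invertible P" and "matrix_inv P ** \<iota> (1, 0) ** P = sigma (1, 0)"
proof (rule order_three_similar_sigma_one[OF assms(1)])
  note rep = small_faithful_repD[OF assms(2)] and one = small_faithful_rep_zero[OF assms(2)]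
  have "\<iota> (x + x + x) = \<iota> x ** \<iota> x ** \<iota> x" for x by (simp add: rep(1))
  then show "\<iota> (1, 0) ** \<iota> (1, 0) ** \<iota> (1, 0) = mat 1"
    using one by (simp only: C3_sq_triple_eq_zero)
  have "\<iota> (1, 0) \<noteq> \<iota> 0" using rep(2) by (simp add: inj_eq zero_prod_def)
  then show "\<iota> (1, 0) \<noteq> mat 1" using one by simp
  show "\<not> pseudo_reflection (\<iota> (1, 0))" by (rule rep(4))
qed

lemma small_faithful_rep_C3_sq_eq_sigma_U:
  fixes \<rho> :: "3 \<times> 3 \<Rightarrow> 'a::field^3^3"
  assumes "CHAR('a) = 3" and "small_faithful_rep \<rho>" and "\<rho> (1, 0) = sigma (1, 0)"
  shows "\<exists>a b. a \<notin> prime_subfield \<and> range \<rho> = sigma ` U a b"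
proof -
  note rep = small_faithful_repD[OF assms(2)]
  obtain c d where c: "\<And>x y. c (x + y) = c x + c y" and d: "\<And>x y. d (x + y) = d x + d y"
    and "c (1, 0) = 1" "d (1, 0) = 0" and \<rho>_sigma: "\<And>x. \<rho> x = sigma (c x, d x)"
    using sigma_coordinates_of_hom[OF assms(1) rep(1) rep(3) assms(3)] by blast
  have "y = 0" if "c y = 0" for y
  proof -
    have "\<rho> y = sigma (0, d y)" using \<rho>_sigma[of y] that by simp
    then have "\<rho> y = mat 1"
      using pseudo_reflection_if_square_zero[of "\<rho> y"] sigma_0_minus_one_square[of "d y"] rep(4)[of y]
      by auto
    then show "y = 0"
      using rep(2) by (simp add: inj_eq flip: small_faithful_rep_zero[OF assms(2)])
  qed
  then have "c (0, 1) \<notin> prime_subfield"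
    using notin_prime_subfield_if_trivial_kernel c \<open>c (1, 0) = 1\<close> by blast
  moreover have "range \<rho> = sigma ` range (\<lambda>y. (c y, d y))"
    by (simp add: \<rho>_sigma image_image)
  ultimately show ?thesis
    using range_additive_eq_U[OF c d \<open>c (1, 0) = 1\<close> \<open>d (1, 0) = 0\<close>] by metis
qed

theorem proposition3p1:
  fixes \<iota> :: "3 \<times> 3 \<Rightarrow> ('a::alg_closed_field)^3^3"
  assumes "CHAR('a) = 3"
    and hom: "\<forall>x y. \<iota> (x + y) = \<iota> x ** \<iota> y"
    and inj: "inj \<iota>"
    and SL: "range \<iota> \<subseteq> SL3"
    and sm: "small (range \<iota>)"
  shows "\<exists>a b. a \<notin> prime_subfield \<and> conjugate_in_GL3 (sigma ` U a b) (range \<iota>)"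
proof -
  have rep: "small_faithful_rep \<iota>" using hom inj SL sm by (simp add: small_faithful_rep_def)
  obtain P where P: "invertible P" "matrix_inv P ** \<iota> (1, 0) ** P = sigma (1, 0)"
    by (rule small_faithful_rep_C3_sq_similar_sigma_one[OF assms(1) rep])
  obtain a b where "a \<notin> prime_subfield"
    and "range (\<lambda>y. matrix_inv P ** \<iota> y ** P) = sigma ` U a b"
    using small_faithful_rep_C3_sq_eq_sigma_U[OF assms(1) small_faithful_rep_matrix_conj[OF P(1) rep]]
      P(2) by blast
  moreover have "conjugate_in_GL3 (range (\<lambda>y. matrix_inv P ** \<iota> y ** P)) (range \<iota>)"
    using conjugate_in_GL3_matrix_conj[OF P(1), of "range \<iota>"] by (simp add: image_image)
  ultimately show ?thesis by auto
qed

end
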